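(* Let $\mathbb{E},\mathbb{F}$ be Euclidean spaces, $A\colon\mathbb{E}\to\mathbb{F}$ linear, $b\in\operatorname{Range}A$, $c\in\mathbb{E}$, and $\mathcal{K}\subseteq\mathbb{E}$ a closed convex cone with nonempty interior. Consider the primal problem $\inf\{\langle c,x\rangle: Ax=b,\ x\in\mathcal{K}\}$ and its dual $\sup\{\langle b,y\rangle: c-A^*y\in\mathcal{K}^*\}$. Suppose the primal problem is feasible with finite optimal value $\mathrm{val}$, and define $$\operatorname{cond}:=\min_{y\in\mathbb{F}:\ \|y\|=1}\ \max\{\operatorname{dist}_{\mathcal{K}^*}(A^*y),\ \langle b,y\rangle\}.$$ If $\operatorname{cond}\neq 0$, then every optimal solution $y$ of the dual problem satisfies $$\|y\|\le\frac{\max\{\|c\|,-\mathrm{val}\}}{\operatorname{cond}}.$$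
   Context: $\mathcal{K}^*:=\{z\in\mathbb{E}:\langle x,z\rangle\ge 0\ \forall x\in\mathcal{K}\}$ is the dual cone, $A^*$ the adjoint of $A$, and $\operatorname{dist}_{\mathcal{K}^*}(w)$ the Euclidean distance from $w$ to $\mathcal{K}^*$. *)

theory Defs
  imports "HOL-Analysis.Analysis"
begin

definition dual_cone :: "'a::real_inner set \<Rightarrow> 'a set" where
  "dual_cone K = {z. \<forall>x\<in>K. x \<bullet> z \<ge> 0}"

end

theory Submission
  imports Defs
begin

text \<open>The dual optimum is at least the primal value: otherwise separating the image of
  \<open>K\<close> under \<open>x \<mapsto> (A x, \<langle>c,x\<rangle>)\<close> from a point \<open>(b, t)\<close> with \<open>t\<close> strictly between the two values
  either yields a dual feasible point beating \<open>y\<close>, or a nonzero \<open>z\<close> with \<open>A\<^sup>*z \<in> \<K>\<^sup>*\<close>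
  and \<open>\<langle>b,z\<rangle> \<le> 0\<close> (excluded by \<open>cond > 0\<close>), or contradicts primal feasibility.
  Given this, the unit vector \<open>z = -y/\<parallel>y\<parallel>\<close> has \<open>dist(A\<^sup>*z, \<K>\<^sup>*) \<le> \<parallel>c\<parallel>/\<parallel>y\<parallel>\<close>, witnessed by
  \<open>(c - A\<^sup>*y)/\<parallel>y\<parallel> \<in> \<K>\<^sup>*\<close>, and \<open>\<langle>b,z\<rangle> \<le> -val/\<parallel>y\<parallel>\<close>; hence \<open>cond \<le> max(\<parallel>c\<parallel>, -val)/\<parallel>y\<parallel>\<close>.\<close>

lemma cone_dual_cone: "cone (dual_cone K)"
  by (auto simp: cone_def dual_cone_def)

lemma cone_linear_image:
  assumes "linear f" "cone S"
  shows "cone (f ` S)"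
proof -
  have "conic S" using assms(2) by (simp add: cone_def conic_def)
  then have "conic (f ` S)" using assms(1) by (rule conic_linear_image)
  then show ?thesis by (simp add: cone_def conic_def)
qed

lemma separating_hyperplane_cone_point:
  fixes C :: "'a::euclidean_space set"
  assumes "convex C" "cone C" "C \<noteq> {}" "v \<notin> C"
  obtains a where "a \<noteq> 0" "a \<bullet> v \<le> 0" "\<And>p. p \<in> C \<Longrightarrow> 0 \<le> a \<bullet> p"
proof -
  obtain a \<beta> where a: "a \<noteq> 0" "a \<bullet> v \<le> \<beta>" "\<And>p. p \<in> C \<Longrightarrow> \<beta> \<le> a \<bullet> p"
    using separating_hyperplane_sets[of "{v}" C] assms by auto
  have "0 \<in> C" using assms(2,3) cone_contains_0 by blast
  then have \<beta>: "\<beta> \<le> 0" using a(3) by fastforce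
  have "0 \<le> a \<bullet> p" if p: "p \<in> C" for p
  proof (rule ccontr)
    assume neg: "\<not> 0 \<le> a \<bullet> p"
    define r where "r = (\<beta> - 1) / (a \<bullet> p)"
    have "0 \<le> r" using neg \<beta> by (simp add: r_def divide_nonpos_neg)
    then have "r *\<^sub>R p \<in> C" using mem_cone[OF assms(2) p] by blast
    then have "\<beta> \<le> r * (a \<bullet> p)" using a(3) by fastforce
    also have "\<dots> = \<beta> - 1" using neg by (simp add: r_def)
    finally show False by simp
  qed
  then show thesis using that a(1,2) \<beta> by force
qed

lemma primal_value_separation:
  fixes A :: "'a::euclidean_space \<Rightarrow> 'b::euclidean_space"
  assumes lin: "linear A" and K: "convex K" "cone K" "K \<noteq> {}"
    and below: "\<And>x. x \<in> K \<Longrightarrow> A x = b \<Longrightarrow> t < c \<bullet> x"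
  obtains z s where "(z, s) \<noteq> 0" "\<And>x. x \<in> K \<Longrightarrow> 0 \<le> z \<bullet> A x + s * (c \<bullet> x)"
    "z \<bullet> b + s * t \<le> 0"
proof -
  define L where "L = (\<lambda>x. (A x, c \<bullet> x))"
  have "linear L"
    using lin by (simp add: L_def linear_conv_bounded_linear bounded_linear_Pair bounded_linear_inner_right)
  moreover have "(b, t) \<notin> L ` K"
    using below by (auto simp: L_def)
  ultimately obtain a where "a \<noteq> 0" "a \<bullet> (b, t) \<le> 0" "\<And>p. p \<in> L ` K \<Longrightarrow> 0 \<le> a \<bullet> p"
    using separating_hyperplane_cone_point[of "L ` K" "(b, t)"] K
    by (metis convex_linear_image cone_linear_image image_is_empty)
  then show thesis
    using that[of "fst a" "snd a"] by (cases a) (auto simp: L_def)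
qed

lemma primal_value_le_dual_optimum:
  fixes A :: "'a::euclidean_space \<Rightarrow> 'b::euclidean_space"
  assumes lin: "linear A" and K: "convex K" "cone K"
    and feas: "x\<^sub>0 \<in> K" "A x\<^sub>0 = b"
    and bdd: "bdd_below ((\<lambda>x. c \<bullet> x) ` {x. A x = b \<and> x \<in> K})"
    and no_ray: "\<And>z. z \<noteq> 0 \<Longrightarrow> adjoint A z \<in> dual_cone K \<Longrightarrow> 0 < b \<bullet> z"
    and y_opt: "\<forall>y'. c - adjoint A y' \<in> dual_cone K \<longrightarrow> b \<bullet> y' \<le> b \<bullet> y"
  shows "(INF x\<in>{x. A x = b \<and> x \<in> K}. c \<bullet> x) \<le> b \<bullet> y"
proof (rule ccontr)
  define val where "val = (INF x\<in>{x. A x = b \<and> x \<in> K}. c \<bullet> x)"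
  have val_le: "val \<le> c \<bullet> x" if "x \<in> K" "A x = b" for x
    unfolding val_def using bdd that by (intro cINF_lower) auto
  have adj: "x \<bullet> adjoint A z = A x \<bullet> z" for x z
    by (rule adjoint_works[OF lin])
  assume "\<not> val \<le> b \<bullet> y"
  define t where "t = (b \<bullet> y + val) / 2"
  have t: "b \<bullet> y < t" "t < val"
    using \<open>\<not> val \<le> b \<bullet> y\<close> by (auto simp: t_def)
  have "K \<noteq> {}" using feas(1) by blast
  moreover have "t < c \<bullet> x" if "x \<in> K" "A x = b" for x
    using val_le[OF that] t(2) by simp
  ultimately obtain z s where zs: "(z, s) \<noteq> 0"
    and sep: "\<And>x. x \<in> K \<Longrightarrow> 0 \<le> z \<bullet> A x + s * (c \<bullet> x)" and sep_bt: "z \<bullet> b + s * t \<le> 0"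
    using primal_value_separation[OF lin K] by blast
  consider "s > 0" | "s = 0" | "s < 0" by linarith
  then show False
  proof cases
    case 1
    define y' where "y' = - (1 / s) *\<^sub>R z"
    have "x \<bullet> (c - adjoint A y') = (z \<bullet> A x + s * (c \<bullet> x)) / s" for x
      using 1 by (simp add: y'_def inner_diff_right adj inner_commute field_simps)
    then have "c - adjoint A y' \<in> dual_cone K"
      using sep 1 by (simp add: dual_cone_def)
    then have "b \<bullet> y' \<le> b \<bullet> y" using y_opt by blast
    moreover have "t \<le> b \<bullet> y'"
      using sep_bt 1 by (simp add: y'_def inner_commute field_simps)
    ultimately show False using t(1) by simp
  next
    case 2
    have "adjoint A z \<in> dual_cone K"
      using sep 2 by (simp add: dual_cone_def adj inner_commute)
    moreover have "z \<noteq> 0" using zs 2 by (simp add: zero_prod_def)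
    ultimately show False using no_ray sep_bt 2 by (fastforce simp: inner_commute)
  next
    case 3
    have "s * t \<le> s * (c \<bullet> x\<^sub>0)" using sep[OF feas(1)] sep_bt feas(2) by simp
    then have "c \<bullet> x\<^sub>0 \<le> t" using 3 by simp
    then show False using val_le[OF feas] t(2) by simp
  qed
qed

lemma dual_solution_norm_bound:
  fixes A :: "'a::euclidean_space \<Rightarrow> 'b::euclidean_space"
  assumes lin: "linear A"
    and y_feas: "c - adjoint A y \<in> dual_cone K"
    and gap: "val \<le> b \<bullet> y"
    and cond_pos: "0 < cond"
    and cond_le: "\<And>z. norm z = 1 \<Longrightarrow> cond \<le> max (infdist (adjoint A z) (dual_cone K)) (b \<bullet> z)"
  shows "norm y \<le> max (norm c) (- val) / cond"
proof (cases "y = 0")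
  case True
  then show ?thesis using cond_pos by (simp add: le_max_iff_disj)
next
  case False
  define n where "n = norm y"
  have n: "0 < n" using False by (simp add: n_def)
  define z where "z = - (1 / n) *\<^sub>R y"
  have "(1 / n) *\<^sub>R (c - adjoint A y) \<in> dual_cone K"
    using mem_cone[OF cone_dual_cone y_feas] n by simp
  then have "infdist (adjoint A z) (dual_cone K) \<le> dist (adjoint A z) ((1 / n) *\<^sub>R (c - adjoint A y))"
    by (rule infdist_le)
  also have "\<dots> = norm c / n"
  proof -
    have "adjoint A z = - (1 / n) *\<^sub>R adjoint A y"
      using adjoint_linear[OF lin] by (simp add: z_def linear_scale linear_neg)
    then show ?thesis using n by (simp add: dist_norm algebra_simps)
  qed
  also have "\<dots> \<le> max (norm c) (- val) / n"
    using n by (intro divide_right_mono) auto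
  finally have dist_le: "infdist (adjoint A z) (dual_cone K) \<le> max (norm c) (- val) / n" .
  have "b \<bullet> z = - (b \<bullet> y) / n" by (simp add: z_def)
  also have "\<dots> \<le> max (norm c) (- val) / n"
    using gap n by (intro divide_right_mono) auto
  finally have "cond \<le> max (norm c) (- val) / n"
    using cond_le[of z] dist_le n by (simp add: z_def n_def)
  then show ?thesis
    using n cond_pos by (simp add: n_def field_simps)
qed

theorem mainTheorem6:
  fixes A :: "'a::euclidean_space \<Rightarrow> 'b::euclidean_space"
    and b :: 'b and c :: 'a and K :: "'a set" and y :: 'b
  assumes lin: "linear A"
    and b_range: "b \<in> range A"
    and K_closed: "closed K" and K_convex: "convex K" and K_cone: "cone K"
    and K_int: "interior K \<noteq> {}"
    and feas: "{x. A x = b \<and> x \<in> K} \<noteq> {}"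
    and finite_val: "bdd_below ((\<lambda>x. c \<bullet> x) ` {x. A x = b \<and> x \<in> K})"
    and cond_ne: "(INF z\<in>{z::'b. norm z = 1}.
                     max (infdist (adjoint A z) (dual_cone K)) (b \<bullet> z)) \<noteq> 0"
    and y_feas: "c - adjoint A y \<in> dual_cone K"
    and y_opt: "\<forall>y'. c - adjoint A y' \<in> dual_cone K \<longrightarrow> b \<bullet> y' \<le> b \<bullet> y"
  shows "norm y \<le> max (norm c) (- (INF x\<in>{x. A x = b \<and> x \<in> K}. c \<bullet> x))
                   / (INF z\<in>{z::'b. norm z = 1}.
                        max (infdist (adjoint A z) (dual_cone K)) (b \<bullet> z))"
proof -
  define g where "g z = max (infdist (adjoint A z) (dual_cone K)) (b \<bullet> z)" for z
  define cond where "cond = (INF z\<in>{z::'b. norm z = 1}. g z)"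
  have g_nonneg: "0 \<le> g z" for z by (simp add: g_def le_max_iff_disj infdist_nonneg)
  have cond_le: "cond \<le> g z" if "norm z = 1" for z
    unfolding cond_def using that g_nonneg by (intro cINF_lower bdd_belowI2) auto
  have "{z::'b. norm z = 1} \<noteq> {}" using norm_Basis nonempty_Basis by blast
  then have "0 \<le> cond" unfolding cond_def using g_nonneg by (intro cINF_greatest) auto
  with cond_ne have cond_pos: "0 < cond" by (simp add: cond_def g_def)
  have no_ray: "0 < b \<bullet> z" if "z \<noteq> 0" "adjoint A z \<in> dual_cone K" for z
  proof -
    define u where "u = (1 / norm z) *\<^sub>R z"
    have "adjoint A u \<in> dual_cone K"
      using mem_cone[OF cone_dual_cone that(2)] by (simp add: u_def linear_scale[OF adjoint_linear[OF lin]])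
    then have "cond \<le> max 0 (b \<bullet> u)" using cond_le[of u] that(1) by (simp add: u_def g_def)
    then have "0 < b \<bullet> u" using cond_pos by (simp add: max_def split: if_splits)
    then show ?thesis by (simp add: u_def zero_less_divide_iff)
  qed
  obtain x\<^sub>0 where "x\<^sub>0 \<in> K" "A x\<^sub>0 = b" using feas by blast
  then have "(INF x\<in>{x. A x = b \<and> x \<in> K}. c \<bullet> x) \<le> b \<bullet> y"
    using primal_value_le_dual_optimum[OF lin K_convex K_cone] finite_val no_ray y_opt by blast
  then show ?thesis
    using dual_solution_norm_bound[OF lin y_feas _ cond_pos] cond_le
    unfolding cond_def g_def by blast
qed

end
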